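(* Let $G$ be an abelian group and let $(a_n)_{n\in\omega}$ be a $T$-sequence in $G$. Put $A=\{0,a_n,-a_n : n\in\omega\}$ and let $A_n$ denote the sum of $n$ copies of $A$. Then the family $\{F+A_n : F\in[G]^{<\omega},\ n\in\omega\}$ is a base for the group ideal $\mathcal{C}_{\tau(a_n)}$ (i.e. each $F+A_n$ belongs to $\mathcal{C}_{\tau(a_n)}$ and every member of $\mathcal{C}_{\tau(a_n)}$ is contained in some $F+A_n$), and $\mathcal{C}_{\tau(a_n)}=\mathcal{S}_{\tau(a_n)}$. If moreover $G$ is generated by $\{a_n:n\in\omega\}$, then $\{A_n:n\in\omega\}$ is a base for $\mathcal{C}_{\tau(a_n)}$.
   Context: A sequence $(a_n)_{n\in\omega}$ in an abelian group $G$ is a $T$-sequence if there exists a Hausdorff group topology on $G$ in which $(a_n)$ converges to $0$; $\tau(a_n)$ denotes the strongest group topology on $G$ in which $(a_n)$ converges to $0$. $[G]^{<\omega}$ is the family of finite subsets of $G$. For a topological group $(G,\tau)$, $\mathcal{C}_\tau$ is the family of precompact subsets of $G$ (subsets with compact closure), and $\mathcal{S}_\tau$ is the smallest group ideal on $G$ containing every set of the form $\{x\}\cup\{x_n:n\in\omega\}$ where $(x_n)$ is a sequence converging to $x$ in $(G,\tau)$. A group ideal on a group $G$ is a family $\mathcal{I}$ of subsets of $G$ containing all finite subsets and such that $A,B\in\mathcal{I}$, $C\subseteq A$ imply $AB^{-1}\in\mathcal{I}$ and $C\in\mathcal{I}$. *)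

theory Defs
  imports "HOL-Analysis.Analysis"
begin

definition group_topology :: "'a::ab_group_add topology \<Rightarrow> bool" where
  "group_topology T \<longleftrightarrow> topspace T = UNIV
     \<and> continuous_map (prod_topology T T) T (\<lambda>(x, y). x + y)
     \<and> continuous_map T T uminus"

definition T_sequence :: "(nat \<Rightarrow> 'a::ab_group_add) \<Rightarrow> bool" where
  "T_sequence a \<longleftrightarrow> (\<exists>T. group_topology T \<and> Hausdorff_space T \<and> limitin T a 0 sequentially)"

definition tau :: "(nat \<Rightarrow> 'a::ab_group_add) \<Rightarrow> 'a topology" where
  "tau a = (THE T. group_topology T \<and> limitin T a 0 sequentially
              \<and> (\<forall>T'. group_topology T' \<and> limitin T' a 0 sequentially
                      \<longrightarrow> (\<forall>U. openin T' U \<longrightarrow> openin T U)))"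

definition setsum :: "'a::ab_group_add set \<Rightarrow> 'a set \<Rightarrow> 'a set" where
  "setsum A B = {x + y | x y. x \<in> A \<and> y \<in> B}"

definition setdiff :: "'a::ab_group_add set \<Rightarrow> 'a set \<Rightarrow> 'a set" where
  "setdiff A B = {x - y | x y. x \<in> A \<and> y \<in> B}"

fun nsum :: "'a::ab_group_add set \<Rightarrow> nat \<Rightarrow> 'a set" where
  "nsum A 0 = {0}"
| "nsum A (Suc n) = setsum A (nsum A n)"

definition group_ideal :: "'a::ab_group_add set set \<Rightarrow> bool" where
  "group_ideal I \<longleftrightarrow> (\<forall>F. finite F \<longrightarrow> F \<in> I)
     \<and> (\<forall>A\<in>I. \<forall>B\<in>I. setdiff A B \<in> I)
     \<and> (\<forall>A\<in>I. \<forall>C. C \<subseteq> A \<longrightarrow> C \<in> I)"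

definition precompacts :: "'a topology \<Rightarrow> 'a set set" where
  "precompacts T = {B. B \<subseteq> topspace T \<and> compactin T (T closure_of B)}"

definition seq_ideal :: "'a::ab_group_add topology \<Rightarrow> 'a set set" where
  "seq_ideal T = \<Inter>{I. group_ideal I \<and>
      (\<forall>x xs. limitin T xs x sequentially \<longrightarrow> insert x (range xs) \<in> I)}"

definition is_subgroup :: "'a::ab_group_add set \<Rightarrow> bool" where
  "is_subgroup S \<longleftrightarrow> 0 \<in> S \<and> (\<forall>x\<in>S. \<forall>y\<in>S. x - y \<in> S)"

definition gen_subgroup :: "'a::ab_group_add set \<Rightarrow> 'a set" where
  "gen_subgroup X = \<Inter>{S. is_subgroup S \<and> X \<subseteq> S}"

definition is_base :: "'a set set \<Rightarrow> 'a set set \<Rightarrow> bool" where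
  "is_base \<B> I \<longleftrightarrow> \<B> \<subseteq> I \<and> (\<forall>B\<in>I. \<exists>D\<in>\<B>. B \<subseteq> D)"

end

theory Submission
  imports Defs
begin

text \<open>
  The topology \<open>\<tau>(a\<^sub>n)\<close> has an explicit base of neighbourhoods of \<open>0\<close>: with
  \<open>T\<^sub>k = {0, \<plusminus>a\<^sub>n : n \<ge> k}\<close> (so \<open>A = T\<^sub>0\<close>), the sets \<open>\<Union>\<^sub>k (T\<^bsub>m 0\<^esub> + \<dots> + T\<^bsub>m (k-1)\<^esub>)\<close> for
  \<open>m :: nat \<Rightarrow> nat\<close>. Since \<open>A\<close> is compact, so is every \<open>F + A\<^sub>n\<close>. Conversely, if a compact \<open>K\<close>
  lay in no \<open>F + A\<^sub>n\<close>, one could pick \<open>x\<^sub>j \<in> K\<close> with \<open>x\<^sub>j - x\<^sub>i \<notin> A\<^sub>j\<close> for \<open>i < j\<close>; as every \<open>A\<^sub>j\<close> is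
  compact, hence closed, a diagonal choice of \<open>m\<close> keeps all differences \<open>x\<^sub>j - x\<^sub>i\<close> outside the
  \<open>m\<close>-th basic neighbourhood, contradicting total boundedness of \<open>K\<close>.
  The sets covered by some \<open>F + A\<^sub>n\<close> form the group ideal generated by \<open>A\<close>, and \<open>A \<subseteq> X - X\<close>
  for the convergent sequence \<open>X = {0} \<union> {a\<^sub>n}\<close>, whence \<open>\<C> = \<S>\<close>. If the \<open>a\<^sub>n\<close> generate \<open>G\<close>,
  every finite \<open>F\<close> lies in some \<open>A\<^sub>N\<close>.
\<close>

lemma setsum_iff: "z \<in> setsum X Y \<longleftrightarrow> (\<exists>x\<in>X. \<exists>y\<in>Y. z = x + y)"
  unfolding setsum_def by blast

lemma setdiff_iff: "z \<in> setdiff X Y \<longleftrightarrow> (\<exists>x\<in>X. \<exists>y\<in>Y. z = x - y)"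
  unfolding setdiff_def by blast

lemma setsum_memI: "x \<in> X \<Longrightarrow> y \<in> Y \<Longrightarrow> x + y \<in> setsum X Y"
  unfolding setsum_iff by blast

lemma setsum_memE:
  assumes "z \<in> setsum X Y"
  obtains x y where "x \<in> X" "y \<in> Y" "z = x + y"
  using assms unfolding setsum_iff by blast

lemma setdiff_memI: "x \<in> X \<Longrightarrow> y \<in> Y \<Longrightarrow> x - y \<in> setdiff X Y"
  unfolding setdiff_iff by blast

lemma setdiff_mono: "X \<subseteq> X' \<Longrightarrow> Y \<subseteq> Y' \<Longrightarrow> setdiff X Y \<subseteq> setdiff X' Y'"
  unfolding setdiff_def by blast

lemma setsum_eq_image: "setsum X Y = (\<lambda>(x, y). x + y) ` (X \<times> Y)"
  unfolding setsum_def by auto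

lemma setsum_zero_right [simp]: "setsum X {0} = X"
  unfolding setsum_def by auto

lemma setsum_zero_left [simp]: "setsum {0} Y = Y"
  unfolding setsum_def by auto

lemma setsum_mono: "X \<subseteq> X' \<Longrightarrow> Y \<subseteq> Y' \<Longrightarrow> setsum X Y \<subseteq> setsum X' Y'"
  unfolding setsum_def by blast

lemma finite_setdiff: "finite F \<Longrightarrow> finite F' \<Longrightarrow> finite (setdiff F F')"
  unfolding setdiff_def by (simp add: finite_image_set2)

lemma setdiff_self_supset:
  assumes "0 \<in> X"
  shows "X \<union> uminus ` X \<subseteq> setdiff X X"
proof
  fix y assume "y \<in> X \<union> uminus ` X"
  then consider "y \<in> X" | x where "x \<in> X" "y = - x"
    by blast
  then show "y \<in> setdiff X X"
  proof cases
    case 1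
    with assms have "y - 0 \<in> setdiff X X"
      by (intro setdiff_memI)
    then show ?thesis by simp
  next
    case 2
    with assms have "0 - x \<in> setdiff X X"
      by (intro setdiff_memI)
    with 2 show ?thesis by simp
  qed
qed

lemma sum_in_nsum: "(\<And>i. i < k \<Longrightarrow> f i \<in> A) \<Longrightarrow> (\<Sum>i<k. f i) \<in> nsum A k"
proof (induction k)
  case (Suc k)
  then have "f k + (\<Sum>i<k. f i) \<in> setsum A (nsum A k)"
    unfolding setsum_iff by auto
  then show ?case by (simp add: add.commute)
qed simp

lemma nsum_mono:
  assumes "0 \<in> A" "k \<le> j"
  shows "nsum A k \<subseteq> nsum A j"
  using assms(2)
proof (induction j)
  case (Suc j)
  have "nsum A j \<subseteq> nsum A (Suc j)"
    using setsum_mono[of "{0}" A] assms(1) by simp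
  with Suc show ?case by (auto simp: le_Suc_eq)
qed simp

lemma nsum_add: "setsum (nsum A p) (nsum A q) \<subseteq> nsum A (p + q)"
proof (induction p)
  case (Suc p)
  show ?case
  proof
    fix z assume "z \<in> setsum (nsum A (Suc p)) (nsum A q)"
    then obtain b x y where "b \<in> A" "x \<in> nsum A p" "y \<in> nsum A q" "z = b + (x + y)"
      by (auto simp: setsum_iff add.assoc)
    moreover have "x + y \<in> nsum A (p + q)"
      using Suc.IH \<open>x \<in> nsum A p\<close> \<open>y \<in> nsum A q\<close> by (blast intro: setsum_memI)
    ultimately show "z \<in> nsum A (Suc p + q)"
      by (simp add: setsum_memI)
  qed
qed simp

lemma nsum_uminus:
  assumes "\<And>x. x \<in> A \<Longrightarrow> - x \<in> A"
  shows "x \<in> nsum A k \<Longrightarrow> - x \<in> nsum A k"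
proof (induction k arbitrary: x)
  case (Suc k)
  then obtain b y where "b \<in> A" "y \<in> nsum A k" "x = b + y"
    by (auto simp: setsum_iff)
  then have "- b + - y \<in> setsum A (nsum A k)"
    using Suc.IH assms by (intro setsum_memI)
  with \<open>x = b + y\<close> show ?case by (simp add: add.commute)
qed simp

lemma group_ideal_finite: "group_ideal I \<Longrightarrow> finite F \<Longrightarrow> F \<in> I"
  unfolding group_ideal_def by simp

lemma group_ideal_setdiff: "group_ideal I \<Longrightarrow> A \<in> I \<Longrightarrow> B \<in> I \<Longrightarrow> setdiff A B \<in> I"
  unfolding group_ideal_def by simp

lemma group_ideal_subset: "group_ideal I \<Longrightarrow> A \<in> I \<Longrightarrow> C \<subseteq> A \<Longrightarrow> C \<in> I"
  unfolding group_ideal_def by simp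

lemma group_ideal_setsum:
  assumes I: "group_ideal I" and "U \<in> I" "V \<in> I"
  shows "setsum U V \<in> I"
proof -
  have "setdiff {0} V \<in> I"
    using assms by (simp add: group_ideal_setdiff group_ideal_finite)
  with assms have "setdiff U (setdiff {0} V) \<in> I"
    by (simp add: group_ideal_setdiff)
  moreover have "setsum U V \<subseteq> setdiff U (setdiff {0} V)"
  proof
    fix z assume "z \<in> setsum U V"
    then obtain u v where u: "u \<in> U" and v: "v \<in> V" and "z = u + v"
      unfolding setsum_iff by auto
    then show "z \<in> setdiff U (setdiff {0} V)"
      using setdiff_memI[OF u setdiff_memI[of 0 "{0}", OF singletonI v]] by simp
  qed
  ultimately show ?thesis using I group_ideal_subset by blast
qed

definition sums_ideal :: "'a::ab_group_add set \<Rightarrow> 'a set set" where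
  "sums_ideal A = {B. \<exists>F n. finite F \<and> B \<subseteq> setsum F (nsum A n)}"

lemma sums_idealI: "finite F \<Longrightarrow> B \<subseteq> setsum F (nsum A n) \<Longrightarrow> B \<in> sums_ideal A"
  unfolding sums_ideal_def by blast

lemma sums_idealE:
  assumes "B \<in> sums_ideal A"
  obtains F n where "finite F" "B \<subseteq> setsum F (nsum A n)"
  using assms unfolding sums_ideal_def by blast

lemma setdiff_setsum_nsum_subset:
  assumes "\<And>x. x \<in> A \<Longrightarrow> - x \<in> A"
  shows "setdiff (setsum F (nsum A n)) (setsum F' (nsum A n'))
           \<subseteq> setsum (setdiff F F') (nsum A (n + n'))"
proof
  fix z assume "z \<in> setdiff (setsum F (nsum A n)) (setsum F' (nsum A n'))"
  then obtain b c where "b \<in> setsum F (nsum A n)" "c \<in> setsum F' (nsum A n')" "z = b - c"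
    unfolding setdiff_iff by blast
  then obtain f s f' s' where fs: "f \<in> F" "s \<in> nsum A n" "f' \<in> F'" "s' \<in> nsum A n'"
    and "z = (f + s) - (f' + s')"
    unfolding setsum_iff by blast
  then have z: "z = (f - f') + (s + - s')"
    by (simp add: algebra_simps)
  have "s + - s' \<in> setsum (nsum A n) (nsum A n')"
    using fs nsum_uminus[OF assms] by (intro setsum_memI)
  then have "s + - s' \<in> nsum A (n + n')"
    using nsum_add by blast
  then show "z \<in> setsum (setdiff F F') (nsum A (n + n'))"
    unfolding z using fs by (simp add: setdiff_memI setsum_memI)
qed

lemma group_ideal_sums_ideal:
  assumes sym: "\<And>x. x \<in> A \<Longrightarrow> - x \<in> A"
  shows "group_ideal (sums_ideal A)"
  unfolding group_ideal_def
proof (intro conjI allI impI ballI)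
  fix F :: "'a set" assume "finite F"
  then show "F \<in> sums_ideal A" by (rule sums_idealI[where n = 0]) simp
next
  fix B C assume "B \<in> sums_ideal A" "C \<in> sums_ideal A"
  then obtain F n F' n' where "finite F" "finite F'"
    and "B \<subseteq> setsum F (nsum A n)" "C \<subseteq> setsum F' (nsum A n')"
    by (elim sums_idealE)
  from \<open>B \<subseteq> _\<close> \<open>C \<subseteq> _\<close> have "setdiff B C \<subseteq> setdiff (setsum F (nsum A n)) (setsum F' (nsum A n'))"
    by (rule setdiff_mono)
  also have "\<dots> \<subseteq> setsum (setdiff F F') (nsum A (n + n'))"
    using sym by (rule setdiff_setsum_nsum_subset)
  finally show "setdiff B C \<in> sums_ideal A"
    using \<open>finite F\<close> \<open>finite F'\<close> by (blast intro: sums_idealI finite_setdiff)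
next
  fix B C assume "B \<in> sums_ideal A" "C \<subseteq> B"
  then show "C \<in> sums_ideal A"
    by (elim sums_idealE) (blast intro: sums_idealI)
qed

lemma sums_ideal_subset:
  assumes I: "group_ideal I" and "A \<in> I"
  shows "sums_ideal A \<subseteq> I"
proof
  fix B assume "B \<in> sums_ideal A"
  then obtain F n where "finite F" "B \<subseteq> setsum F (nsum A n)"
    by (rule sums_idealE)
  moreover have "nsum A k \<in> I" for k
    by (induction k) (simp_all add: assms group_ideal_finite group_ideal_setsum)
  ultimately show "B \<in> I"
    using I by (meson group_ideal_finite group_ideal_setsum group_ideal_subset)
qed

lemma is_base_sums_ideal: "is_base {setsum F (nsum A n) | F n. finite F} (sums_ideal A)"
  unfolding is_base_def
proof (intro conjI subsetI ballI)
  fix D assume "D \<in> {setsum F (nsum A n) | F n. finite F}"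
  then show "D \<in> sums_ideal A" by (auto intro: sums_idealI)
next
  fix B assume "B \<in> sums_ideal A"
  then show "\<exists>D\<in>{setsum F (nsum A n) | F n. finite F}. B \<subseteq> D"
    by (elim sums_idealE) blast
qed

lemma is_subgroup_Union_nsum:
  assumes "\<And>x. x \<in> A \<Longrightarrow> - x \<in> A"
  shows "is_subgroup (\<Union>k. nsum A k)"
  unfolding is_subgroup_def
proof (intro conjI ballI)
  show "0 \<in> (\<Union>k. nsum A k)"
    using nsum.simps(1) by blast
next
  fix x y assume "x \<in> (\<Union>k. nsum A k)" "y \<in> (\<Union>k. nsum A k)"
  then obtain p q where "x \<in> nsum A p" "- y \<in> nsum A q"
    using nsum_uminus[OF assms] by blast
  then have "x + - y \<in> nsum A (p + q)"
    using nsum_add by (blast intro: setsum_memI)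
  then show "x - y \<in> (\<Union>k. nsum A k)" by auto
qed

lemma finite_subset_nsum:
  assumes "0 \<in> A" "finite F" "F \<subseteq> (\<Union>k. nsum A k)"
  obtains N where "F \<subseteq> nsum A N"
proof -
  have "\<exists>N. F \<subseteq> nsum A N"
    using assms(2,3)
  proof (induction F rule: finite_induct)
    case (insert f F)
    then obtain N k where "F \<subseteq> nsum A N" "f \<in> nsum A k" by blast
    then show ?case
      using nsum_mono[OF assms(1), of N "max N k"] nsum_mono[OF assms(1), of k "max N k"]
      by (intro exI[of _ "max N k"]) auto
  qed simp
  then show ?thesis using that by blast
qed

lemma is_base_nsum_sums_ideal:
  assumes "0 \<in> A" "\<And>x. x \<in> A \<Longrightarrow> - x \<in> A" "X \<subseteq> A" "gen_subgroup X = UNIV"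
  shows "is_base (range (nsum A)) (sums_ideal A)"
  unfolding is_base_def
proof (intro conjI ballI subsetI)
  fix D assume "D \<in> range (nsum A)"
  then show "D \<in> sums_ideal A"
    by (auto intro: sums_idealI[where F = "{0}"])
next
  fix B assume "B \<in> sums_ideal A"
  then obtain F n where "finite F" "B \<subseteq> setsum F (nsum A n)"
    by (rule sums_idealE)
  have "X \<subseteq> nsum A 1"
    using assms(3) by simp
  then have "gen_subgroup X \<subseteq> (\<Union>k. nsum A k)"
    unfolding gen_subgroup_def using is_subgroup_Union_nsum[OF assms(2)] by blast
  then obtain N where "F \<subseteq> nsum A N"
    using finite_subset_nsum[OF assms(1) \<open>finite F\<close>] assms(4) by blast
  then have "B \<subseteq> nsum A (N + n)"
    using \<open>B \<subseteq> _\<close> setsum_mono[of F "nsum A N" "nsum A n"] nsum_add by blast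
  then show "\<exists>D\<in>range (nsum A). B \<subseteq> D" by blast
qed

lemma continuous_map_add_left:
  assumes "group_topology T"
  shows "continuous_map T T ((+) x)"
proof -
  have add: "continuous_map (prod_topology T T) T (\<lambda>(x, y). x + y)" and UNIV: "topspace T = UNIV"
    using assms unfolding group_topology_def by auto
  have "continuous_map T (prod_topology T T) (\<lambda>u. (x, u))"
    by (rule continuous_map_pairedI) (simp_all add: UNIV)
  from continuous_map_compose[OF this add] show ?thesis
    by (simp add: o_def)
qed

lemma group_topology_half_nbhd:
  assumes "group_topology T" "openin T W" "0 \<in> W"
  obtains W' where "openin T W'" "0 \<in> W'" "\<And>x y. x \<in> W' \<Longrightarrow> y \<in> W' \<Longrightarrow> x + y \<in> W"
proof -
  have add: "continuous_map (prod_topology T T) T (\<lambda>(x, y). x + y)" and UNIV: "topspace T = UNIV"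
    using assms(1) unfolding group_topology_def by auto
  define S where "S = {z \<in> topspace (prod_topology T T). (\<lambda>(x, y). x + y) z \<in> W}"
  have "openin (prod_topology T T) S"
    unfolding S_def using add assms(2) by (rule openin_continuous_map_preimage)
  moreover have "(0, 0) \<in> S"
    using assms(3) UNIV by (simp add: S_def)
  ultimately obtain U V where UV: "openin T U" "openin T V" "0 \<in> U" "0 \<in> V" "U \<times> V \<subseteq> S"
    using openin_prod_topology_alt[THEN iffD1, rule_format] by metis
  show thesis
  proof (rule that[of "U \<inter> V"])
    show "openin T (U \<inter> V)" "0 \<in> U \<inter> V"
      using UV by auto
    show "x + y \<in> W" if "x \<in> U \<inter> V" "y \<in> U \<inter> V" for x y
      using that UV(5) by (auto simp: S_def)
  qed
qed

lemma sum_in_halving_chain: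
  fixes V :: "nat \<Rightarrow> 'a::comm_monoid_add set"
  assumes zero: "\<And>k. 0 \<in> V k" and add: "\<And>k x y. x \<in> V (Suc k) \<Longrightarrow> y \<in> V (Suc k) \<Longrightarrow> x + y \<in> V k"
  shows "(\<And>i. i < n \<Longrightarrow> f i \<in> V (Suc (j + i))) \<Longrightarrow> (\<Sum>i<n. f i) \<in> V j"
proof (induction n arbitrary: j f)
  case (Suc n)
  have "(\<Sum>i<n. f (Suc i)) \<in> V (Suc j)"
    using Suc.prems[of "Suc _"] by (intro Suc.IH) simp
  moreover have "f 0 \<in> V (Suc j)"
    using Suc.prems[of 0] by simp
  ultimately have "f 0 + (\<Sum>i<n. f (Suc i)) \<in> V j"
    by (rule add[rotated])
  then show ?case
    by (simp only: sum.lessThan_Suc_shift)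
qed (simp add: zero)

lemma compactin_setsum:
  assumes "group_topology T" "compactin T X" "compactin T Y"
  shows "compactin T (setsum X Y)"
proof -
  have "continuous_map (prod_topology T T) T (\<lambda>(x, y). x + y)"
    using assms(1) unfolding group_topology_def by simp
  moreover have "compactin (prod_topology T T) (X \<times> Y)"
    using assms(2,3) by (simp add: compactin_Times)
  ultimately show ?thesis
    unfolding setsum_eq_image by (rule image_compactin[rotated])
qed

lemma compactin_nsum:
  assumes "group_topology T" "compactin T A"
  shows "compactin T (nsum A n)"
proof (induction n)
  case 0
  then show ?case
    using assms(1) unfolding group_topology_def by simp
qed (simp add: assms compactin_setsum)

lemma compactin_convergent_symmetric:
  assumes T: "group_topology T" and lim: "limitin T a 0 sequentially"
  shows "compactin T ({0} \<union> range a \<union> range (\<lambda>n. - a n))"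
proof -
  have "continuous_map T T uminus"
    using T unfolding group_topology_def by simp
  then have lim': "limitin T (\<lambda>n. - a n) 0 sequentially"
    using continuous_map_limit[OF _ lim] by (force simp: o_def)
  have UNIV: "topspace T = UNIV"
    using T unfolding group_topology_def by simp
  have "compactin T (insert 0 (range a))" "compactin T (insert 0 (range (\<lambda>n. - a n)))"
    by (rule compactin_sequence_with_limit[OF lim] compactin_sequence_with_limit[OF lim'];
        simp add: UNIV)+
  then have "compactin T (insert 0 (range a) \<union> insert 0 (range (\<lambda>n. - a n)))"
    by (rule compactin_Un)
  moreover have "insert 0 (range a) \<union> insert 0 (range (\<lambda>n. - a n)) = {0} \<union> range a \<union> range (\<lambda>n. - a n)"
    by blast
  ultimately show ?thesis by simp
qed

lemma precompactsI:
  assumes "Hausdorff_space X" "compactin X K" "B \<subseteq> K"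
  shows "B \<in> precompacts X"
proof -
  have "X closure_of B \<subseteq> K"
    using assms by (metis closure_of_closedin closure_of_mono compactin_imp_closedin)
  with assms(2) have "compactin X (X closure_of B)"
    by (rule closed_compactin) simp
  moreover have "B \<subseteq> topspace X"
    using assms(2,3) compactin_subset_topspace by blast
  ultimately show ?thesis
    unfolding precompacts_def by blast
qed

section \<open>The topology of tail sums\<close>

definition tails :: "(nat \<Rightarrow> 'a::ab_group_add) \<Rightarrow> nat \<Rightarrow> 'a set" where
  "tails a k = {0} \<union> a ` {k..} \<union> (\<lambda>n. - a n) ` {k..}"

text \<open>\<open>tail_sums a m\<close> is the neighbourhood \<open>\<Union>\<^sub>k (T\<^bsub>m 0\<^esub> + \<dots> + T\<^bsub>m (k-1)\<^esub>)\<close> of \<open>0\<close> from the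
  Protasov--Zelenyuk description of \<open>\<tau>(a\<^sub>n)\<close>, where \<open>T\<^sub>k = tails a k\<close>.\<close>
definition tail_sums :: "(nat \<Rightarrow> 'a::ab_group_add) \<Rightarrow> (nat \<Rightarrow> nat) \<Rightarrow> 'a set" where
  "tail_sums a m = {\<Sum>i<k. f i | k f. \<forall>i<k. f i \<in> tails a (m i)}"

lemma tails_antimono: "p \<le> q \<Longrightarrow> tails a q \<subseteq> tails a p"
  unfolding tails_def by auto

lemma zero_in_tails [simp]: "0 \<in> tails a k"
  unfolding tails_def by simp

lemma uminus_in_tails: "x \<in> tails a k \<Longrightarrow> - x \<in> tails a k"
  unfolding tails_def by auto

lemma tails_0: "tails a 0 = {0} \<union> range a \<union> range (\<lambda>n. - a n)"
  unfolding tails_def by simp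

lemma tail_sumsI: "(\<And>i. i < k \<Longrightarrow> f i \<in> tails a (m i)) \<Longrightarrow> (\<Sum>i<k. f i) \<in> tail_sums a m"
  unfolding tail_sums_def by blast

lemma zero_in_tail_sums [simp]: "0 \<in> tail_sums a m"
  using tail_sumsI[of 0] by simp

lemma seq_in_tail_sums: "m 0 \<le> n \<Longrightarrow> a n \<in> tail_sums a m"
  using tail_sumsI[of 1 "\<lambda>_. a n" a m] by (simp add: tails_def)

lemma tail_sums_padded:
  assumes "x \<in> tail_sums a m"
  shows "\<exists>f k. (\<forall>i. f i \<in> tails a (m i)) \<and> (\<forall>n\<ge>k. x = (\<Sum>i<n. f i))"
proof -
  obtain k f where x: "x = (\<Sum>i<k. f i)" and f: "\<forall>i<k. f i \<in> tails a (m i)"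
    using assms unfolding tail_sums_def by blast
  define g where "g i = (if i < k then f i else 0)" for i
  have "x = (\<Sum>i<n. g i)" if "k \<le> n" for n
  proof -
    have "(\<Sum>i<n. g i) = sum f ({..<n} \<inter> {i. i < k})"
      unfolding g_def by (simp add: sum.inter_restrict)
    also have "{..<n} \<inter> {i. i < k} = {..<k}"
      using that by auto
    finally show ?thesis using x by simp
  qed
  moreover have "g i \<in> tails a (m i)" for i
    using f by (simp add: g_def)
  ultimately show ?thesis by blast
qed

lemma uminus_in_tail_sums:
  assumes "x \<in> tail_sums a m"
  shows "- x \<in> tail_sums a m"
proof -
  obtain k f where "x = (\<Sum>i<k. f i)" "\<forall>i<k. f i \<in> tails a (m i)"
    using assms unfolding tail_sums_def by blast
  then have "- x = (\<Sum>i<k. - f i)" "\<forall>i<k. - f i \<in> tails a (m i)"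
    by (simp_all add: sum_negf uminus_in_tails)
  then show ?thesis by (simp add: tail_sumsI)
qed

lemma tail_sums_antimono:
  assumes "\<And>k. m k \<le> m' k"
  shows "tail_sums a m' \<subseteq> tail_sums a m"
proof
  fix x assume "x \<in> tail_sums a m'"
  then obtain k f where x: "x = (\<Sum>i<k. f i)" and "\<forall>i<k. f i \<in> tails a (m' i)"
    unfolding tail_sums_def by blast
  then have "\<forall>i<k. f i \<in> tails a (m i)"
    using assms tails_antimono by blast
  with x show "x \<in> tail_sums a m"
    by (simp add: tail_sumsI)
qed

lemma tail_sums_Int: "tail_sums a (\<lambda>k. max (m k) (m' k)) \<subseteq> tail_sums a m \<inter> tail_sums a m'"
  by (intro Int_greatest tail_sums_antimono) simp_all

text \<open>Interleaving the summands of two elements of the smaller set, the summand at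
  position \<open>p\<close> comes from the \<open>p div 2\<close>-th term, whose index bound \<open>m (2i) + m (2i+1)\<close>
  dominates \<open>m p\<close>.\<close>
lemma tail_sums_add:
  assumes "x \<in> tail_sums a (\<lambda>i. m (2 * i) + m (2 * i + 1))"
    and "y \<in> tail_sums a (\<lambda>i. m (2 * i) + m (2 * i + 1))"
  shows "x + y \<in> tail_sums a m"
proof -
  let ?m' = "\<lambda>i. m (2 * i) + m (2 * i + 1)"
  obtain f k where f: "\<And>i. f i \<in> tails a (?m' i)" "\<And>n. k \<le> n \<Longrightarrow> x = (\<Sum>i<n. f i)"
    using tail_sums_padded[OF assms(1)] by blast
  obtain g l where g: "\<And>i. g i \<in> tails a (?m' i)" "\<And>n. l \<le> n \<Longrightarrow> y = (\<Sum>i<n. g i)"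
    using tail_sums_padded[OF assms(2)] by blast
  define h where "h p = (if even p then f (p div 2) else g (p div 2))" for p
  have interleave: "(\<Sum>p<2 * N. h p) = (\<Sum>i<N. f i) + (\<Sum>i<N. g i)" for N
    by (induction N) (simp_all add: h_def algebra_simps)
  have "h p \<in> tails a (m p)" for p
  proof (cases "even p")
    case True
    then have "m p \<le> ?m' (p div 2)" by auto
    then have "f (p div 2) \<in> tails a (m p)"
      using f(1) tails_antimono by blast
    with True show ?thesis by (simp add: h_def)
  next
    case False
    then have "m p \<le> ?m' (p div 2)" by (auto elim: oddE)
    then have "g (p div 2) \<in> tails a (m p)"
      using g(1) tails_antimono by blast
    with False show ?thesis by (simp add: h_def)
  qed
  then have "(\<Sum>p<2 * max k l. h p) \<in> tail_sums a m"
    by (simp add: tail_sumsI)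
  then show ?thesis
    using f(2)[of "max k l"] g(2)[of "max k l"] by (simp add: interleave)
qed

lemma tail_sums_split:
  assumes "x \<in> tail_sums a m"
  obtains s u where "s \<in> nsum (tails a 0) j" "u \<in> tail_sums a (\<lambda>r. m (j + r))" "x = s + u"
proof -
  obtain f k where f: "\<And>i. f i \<in> tails a (m i)" and x: "\<And>n. k \<le> n \<Longrightarrow> x = (\<Sum>i<n. f i)"
    using tail_sums_padded[OF assms] by blast
  have "(\<Sum>q<j + k. f q) = (\<Sum>q<j. f q) + (\<Sum>r<k. f (j + r))"
    by (induction k) (simp_all add: add.assoc)
  moreover have "(\<Sum>q<j. f q) \<in> nsum (tails a 0) j"
    using f tails_antimono[of 0] by (blast intro: sum_in_nsum)
  moreover have "(\<Sum>r<k. f (j + r)) \<in> tail_sums a (\<lambda>r. m (j + r))"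
    using f by (simp add: tail_sumsI)
  ultimately show thesis
    using that x[of "j + k"] by simp
qed

definition tail_topology :: "(nat \<Rightarrow> 'a::ab_group_add) \<Rightarrow> 'a topology" where
  "tail_topology a = topology (\<lambda>V. \<forall>x\<in>V. \<exists>m. (+) x ` tail_sums a m \<subseteq> V)"

lemma istopology_tail_topology: "istopology (\<lambda>V. \<forall>x\<in>V. \<exists>m. (+) x ` tail_sums a m \<subseteq> V)"
  unfolding istopology_def
proof (intro conjI allI impI ballI)
  fix S T x
  assume "\<forall>x\<in>S. \<exists>m. (+) x ` tail_sums a m \<subseteq> S" "\<forall>x\<in>T. \<exists>m. (+) x ` tail_sums a m \<subseteq> T"
    and "x \<in> S \<inter> T"
  then obtain m m' where "(+) x ` tail_sums a m \<subseteq> S" "(+) x ` tail_sums a m' \<subseteq> T"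
    by blast
  then have "(+) x ` tail_sums a (\<lambda>k. max (m k) (m' k)) \<subseteq> S \<inter> T"
    using tail_sums_Int by blast
  then show "\<exists>m. (+) x ` tail_sums a m \<subseteq> S \<inter> T" by blast
next
  fix K x assume "\<forall>S\<in>K. \<forall>x\<in>S. \<exists>m. (+) x ` tail_sums a m \<subseteq> S" "x \<in> \<Union>K"
  then show "\<exists>m. (+) x ` tail_sums a m \<subseteq> \<Union>K"
    by (meson Union_iff Union_upper subset_trans)
qed

lemma openin_tail_topology:
  "openin (tail_topology a) V \<longleftrightarrow> (\<forall>x\<in>V. \<exists>m. (+) x ` tail_sums a m \<subseteq> V)"
  unfolding tail_topology_def topology_inverse'[OF istopology_tail_topology] ..

lemma topspace_tail_topology [simp]: "topspace (tail_topology a) = UNIV"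
  using openin_subset[of "tail_topology a" UNIV] by (auto simp: openin_tail_topology)

lemma openin_tail_topology_translation:
  assumes "openin (tail_topology a) V"
  shows "openin (tail_topology a) ((+) y ` V)"
  unfolding openin_tail_topology
proof
  fix x assume "x \<in> (+) y ` V"
  then obtain v where "v \<in> V" "x = y + v" by blast
  then obtain m where "(+) v ` tail_sums a m \<subseteq> V"
    using assms unfolding openin_tail_topology by blast
  then have "(+) x ` tail_sums a m \<subseteq> (+) y ` V"
    using \<open>x = y + v\<close> by (auto simp: add.assoc)
  then show "\<exists>m. (+) x ` tail_sums a m \<subseteq> (+) y ` V" by blast
qed

text \<open>The points having a whole translate of some \<open>tail_sums a m'\<close> inside \<open>tail_sums a m\<close>
  form an open set, since \<open>tail_sums a m'\<close> is itself the sum of two smaller such sets.\<close>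
lemma zero_in_interior_tail_sums: "0 \<in> (tail_topology a) interior_of (tail_sums a m)"
proof -
  define I where "I = {x. \<exists>m'. (+) x ` tail_sums a m' \<subseteq> tail_sums a m}"
  have "openin (tail_topology a) I"
    unfolding openin_tail_topology
  proof
    fix x assume "x \<in> I"
    then obtain m' where m': "(+) x ` tail_sums a m' \<subseteq> tail_sums a m"
      unfolding I_def by blast
    let ?m'' = "\<lambda>i. m' (2 * i) + m' (2 * i + 1)"
    have "(+) (x + u) ` tail_sums a ?m'' \<subseteq> tail_sums a m" if "u \<in> tail_sums a ?m''" for u
    proof
      fix z assume "z \<in> (+) (x + u) ` tail_sums a ?m''"
      then obtain w where "w \<in> tail_sums a ?m''" "z = x + (u + w)"
        by (auto simp: add.assoc)
      then show "z \<in> tail_sums a m"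
        using m' tail_sums_add[OF that] by blast
    qed
    then have "(+) x ` tail_sums a ?m'' \<subseteq> I"
      unfolding I_def by blast
    then show "\<exists>m. (+) x ` tail_sums a m \<subseteq> I" by blast
  qed
  moreover have "0 \<in> I" "I \<subseteq> tail_sums a m"
    unfolding I_def using zero_in_tail_sums by force+
  ultimately show ?thesis
    unfolding interior_of_def by blast
qed

lemma group_topology_tail_topology: "group_topology (tail_topology a)"
  unfolding group_topology_def
proof (intro conjI)
  let ?T = "tail_topology a"
  show "topspace ?T = UNIV" by simp
  show "continuous_map (prod_topology ?T ?T) ?T (\<lambda>(x, y). x + y)"
    unfolding continuous_map_def
  proof (intro conjI allI impI)
    fix V assume V: "openin ?T V"
    show "openin (prod_topology ?T ?T) {z \<in> topspace (prod_topology ?T ?T). (\<lambda>(x, y). x + y) z \<in> V}"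
      unfolding openin_prod_topology_alt
    proof (intro allI impI)
      fix x y assume "(x, y) \<in> {z \<in> topspace (prod_topology ?T ?T). (\<lambda>(x, y). x + y) z \<in> V}"
      then have "x + y \<in> V" by simp
      then obtain m where m: "(+) (x + y) ` tail_sums a m \<subseteq> V"
        using V unfolding openin_tail_topology by blast
      let ?I = "?T interior_of tail_sums a (\<lambda>i. m (2 * i) + m (2 * i + 1))"
      have "(x + u) + (y + v) \<in> V" if "u \<in> ?I" "v \<in> ?I" for u v
      proof -
        have "u + v \<in> tail_sums a m"
          using that interior_of_subset[of ?T] by (intro tail_sums_add) blast+
        then have "(x + y) + (u + v) \<in> V"
          using m by blast
        then show ?thesis
          by (simp add: algebra_simps)
      qed
      then have "(+) x ` ?I \<times> (+) y ` ?I \<subseteq> {z \<in> topspace (prod_topology ?T ?T). (\<lambda>(x, y). x + y) z \<in> V}"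
        by auto
      moreover have "x \<in> (+) x ` ?I" "y \<in> (+) y ` ?I"
        by (rule rev_image_eqI[OF zero_in_interior_tail_sums], simp)+
      ultimately show "\<exists>U W. openin ?T U \<and> openin ?T W \<and> x \<in> U \<and> y \<in> W \<and> U \<times> W
          \<subseteq> {z \<in> topspace (prod_topology ?T ?T). (\<lambda>(x, y). x + y) z \<in> V}"
        by (meson openin_interior_of openin_tail_topology_translation)
    qed
  qed auto
  show "continuous_map ?T ?T uminus"
    unfolding continuous_map_def openin_tail_topology
  proof (intro conjI allI impI ballI)
    fix V x assume V: "\<forall>x\<in>V. \<exists>m. (+) x ` tail_sums a m \<subseteq> V"
      and "x \<in> {x \<in> topspace ?T. - x \<in> V}"
    then obtain m where m: "(+) (- x) ` tail_sums a m \<subseteq> V"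
      by blast
    have "(+) x ` tail_sums a m \<subseteq> {x \<in> topspace ?T. - x \<in> V}"
    proof
      fix z assume "z \<in> (+) x ` tail_sums a m"
      then obtain u where "u \<in> tail_sums a m" and z: "z = x + u"
        by blast
      then have "- x + - u \<in> V"
        using m uminus_in_tail_sums by blast
      then show "z \<in> {x \<in> topspace ?T. - x \<in> V}"
        unfolding z by (simp add: algebra_simps)
    qed
    then show "\<exists>m. (+) x ` tail_sums a m \<subseteq> {x \<in> topspace ?T. - x \<in> V}" by blast
  qed auto
qed

lemma limitin_tail_topology: "limitin (tail_topology a) a 0 sequentially"
  unfolding limitin_def
proof (intro conjI allI impI)
  fix V assume "openin (tail_topology a) V \<and> 0 \<in> V"
  then obtain m where "tail_sums a m \<subseteq> V"
    unfolding openin_tail_topology by fastforce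
  then have "\<forall>n\<ge>m 0. a n \<in> V"
    using seq_in_tail_sums by blast
  then show "\<forall>\<^sub>F n in sequentially. a n \<in> V"
    unfolding eventually_sequentially by blast
qed simp

text \<open>Iterated halving gives a chain \<open>V (Suc k) + V (Suc k) \<subseteq> V k\<close> below \<open>V 0 = W\<close>;
  choosing \<open>m k\<close> so that the \<open>k\<close>-th tail lies in \<open>V (Suc k)\<close> puts \<open>tail_sums a m\<close> into \<open>W\<close>.\<close>
lemma tail_sums_subset_nbhd:
  assumes T: "group_topology T" and lim: "limitin T a 0 sequentially"
    and W: "openin T W" "0 \<in> W"
  obtains m where "tail_sums a m \<subseteq> W"
proof -
  define h where "h W = (SOME W'. openin T W' \<and> 0 \<in> W' \<and> (\<forall>x\<in>W'. \<forall>y\<in>W'. x + y \<in> W))" for W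
  have h: "openin T (h W) \<and> 0 \<in> h W \<and> (\<forall>x\<in>h W. \<forall>y\<in>h W. x + y \<in> W)"
    if "openin T W" "0 \<in> W" for W
    unfolding h_def
    by (rule someI_ex, rule group_topology_half_nbhd[OF T that]) blast
  define V where "V k = (h ^^ k) W" for k
  have V: "openin T (V k) \<and> 0 \<in> V k" for k
    by (induction k) (simp_all add: V_def W h)
  have V_add: "x \<in> V (Suc k) \<Longrightarrow> y \<in> V (Suc k) \<Longrightarrow> x + y \<in> V k" for k x y
    using h[of "V k"] V[of k] by (simp add: V_def)
  have "continuous_map T T uminus"
    using T unfolding group_topology_def by simp
  then have lim': "limitin T (\<lambda>n. - a n) 0 sequentially"
    using continuous_map_limit[OF _ lim] by (force simp: o_def)
  have "\<exists>N. \<forall>n\<ge>N. a n \<in> V (Suc k) \<and> - a n \<in> V (Suc k)" for k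
    using lim lim' V[of "Suc k"] unfolding limitin_def eventually_sequentially[symmetric]
    by (simp add: eventually_conj)
  then obtain m where m: "\<And>k n. m k \<le> n \<Longrightarrow> a n \<in> V (Suc k) \<and> - a n \<in> V (Suc k)"
    by (metis (full_types))
  then have tails: "tails a (m k) \<subseteq> V (Suc k)" for k
    using V[of "Suc k"] unfolding tails_def by auto
  have "tail_sums a m \<subseteq> V 0"
  proof
    fix x assume "x \<in> tail_sums a m"
    then obtain k f where x: "x = (\<Sum>i<k. f i)" and f: "\<forall>i<k. f i \<in> tails a (m i)"
      unfolding tail_sums_def by blast
    have "f i \<in> V (Suc (0 + i))" if "i < k" for i
      using f tails that by auto
    then show "x \<in> V 0"
      unfolding x using sum_in_halving_chain[of V, OF conjunct2[OF V] V_add] by blast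
  qed
  then show thesis
    using that by (simp add: V_def)
qed

lemma openin_tail_topology_if_converges:
  assumes T: "group_topology T" and lim: "limitin T a 0 sequentially" and V: "openin T V"
  shows "openin (tail_topology a) V"
  unfolding openin_tail_topology
proof
  fix x assume "x \<in> V"
  have "openin T {u \<in> topspace T. x + u \<in> V}"
    using continuous_map_add_left[OF T] V by (rule openin_continuous_map_preimage)
  moreover have "0 \<in> {u \<in> topspace T. x + u \<in> V}"
    using T \<open>x \<in> V\<close> unfolding group_topology_def by simp
  ultimately obtain m where "tail_sums a m \<subseteq> {u \<in> topspace T. x + u \<in> V}"
    by (rule tail_sums_subset_nbhd[OF T lim])
  then show "\<exists>m. (+) x ` tail_sums a m \<subseteq> V"
    by blast
qed

lemma tau_eq_tail_topology: "tau a = tail_topology a"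
  unfolding tau_def
proof (rule the_equality)
  show "group_topology (tail_topology a) \<and> limitin (tail_topology a) a 0 sequentially \<and>
    (\<forall>T. group_topology T \<and> limitin T a 0 sequentially \<longrightarrow>
       (\<forall>U. openin T U \<longrightarrow> openin (tail_topology a) U))"
    by (blast intro: group_topology_tail_topology limitin_tail_topology openin_tail_topology_if_converges)
next
  fix T assume "group_topology T \<and> limitin T a 0 sequentially \<and>
    (\<forall>T'. group_topology T' \<and> limitin T' a 0 sequentially \<longrightarrow> (\<forall>U. openin T' U \<longrightarrow> openin T U))"
  then have "openin (tail_topology a) U \<longleftrightarrow> openin T U" for U
    using group_topology_tail_topology limitin_tail_topology openin_tail_topology_if_converges
    by metis
  then show "T = tail_topology a"
    by (simp add: topology_eq)
qed

lemma Hausdorff_tail_topology: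
  assumes "T_sequence a"
  shows "Hausdorff_space (tail_topology a)"
proof -
  obtain T where T: "group_topology T" "Hausdorff_space T" "limitin T a 0 sequentially"
    using assms unfolding T_sequence_def by blast
  then have "topspace T = topspace (tail_topology a)"
    unfolding group_topology_def by simp
  with T show ?thesis
    by (metis Hausdorff_space_expansive openin_tail_topology_if_converges)
qed

section \<open>Compact sets of the tail topology\<close>

lemma compactin_nsum_tails: "compactin (tail_topology a) (nsum (tails a 0) n)"
proof -
  have "compactin (tail_topology a) (tails a 0)"
    unfolding tails_0
    by (rule compactin_convergent_symmetric[OF group_topology_tail_topology limitin_tail_topology])
  then show ?thesis
    by (rule compactin_nsum[OF group_topology_tail_topology])
qed

lemma compactin_subset_finite_translates:
  assumes K: "compactin (tail_topology a) K"
  obtains F where "finite F" "K \<subseteq> setsum F (tail_sums a m)"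
proof -
  let ?I = "(tail_topology a) interior_of (tail_sums a m)"
  define C where "C = (\<lambda>y. (+) y ` ?I) ` K"
  have "\<forall>U\<in>C. openin (tail_topology a) U"
    unfolding C_def by (simp add: openin_tail_topology_translation)
  moreover have "K \<subseteq> \<Union>C"
  proof
    fix y assume "y \<in> K"
    moreover have "y \<in> (+) y ` ?I"
      by (rule rev_image_eqI[OF zero_in_interior_tail_sums]) simp
    ultimately show "y \<in> \<Union>C"
      unfolding C_def by blast
  qed
  ultimately obtain D where D: "finite D" "D \<subseteq> C" "K \<subseteq> \<Union>D"
    using K unfolding compactin_def by meson
  obtain F where F: "finite F" "D = (\<lambda>y. (+) y ` ?I) ` F"
    using finite_subset_image[OF D(1) D(2)[unfolded C_def]] by blast
  have "K \<subseteq> setsum F (tail_sums a m)"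
  proof
    fix z assume "z \<in> K"
    with D(3) have "z \<in> \<Union>D"
      by (rule subsetD)
    then obtain f where "f \<in> F" "z \<in> (+) f ` ?I"
      unfolding F(2) by (rule UN_E)
    from \<open>z \<in> (+) f ` ?I\<close> obtain u where "u \<in> ?I" "z = f + u"
      by (rule imageE)
    from interior_of_subset \<open>u \<in> ?I\<close> have "u \<in> tail_sums a m"
      by (rule subsetD)
    with \<open>f \<in> F\<close> show "z \<in> setsum F (tail_sums a m)"
      unfolding \<open>z = f + u\<close> by (rule setsum_memI)
  qed
  with F(1) show thesis ..
qed

lemma compactin_close_pair:
  fixes x :: "nat \<Rightarrow> 'a::ab_group_add"
  assumes K: "compactin (tail_topology a) K" and x: "range x \<subseteq> K"
  obtains i j where "i < j" "x j - x i \<in> tail_sums a m"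
proof -
  let ?m' = "\<lambda>i. m (2 * i) + m (2 * i + 1)"
  obtain F where F: "finite F" "K \<subseteq> setsum F (tail_sums a ?m')"
    using K by (rule compactin_subset_finite_translates)
  have "\<exists>f. f \<in> F \<and> x j - f \<in> tail_sums a ?m'" for j
  proof -
    from x have "x j \<in> K" by (rule range_subsetD)
    with F(2) have "x j \<in> setsum F (tail_sums a ?m')" by (rule subsetD)
    then obtain f u where "f \<in> F" "u \<in> tail_sums a ?m'" "x j = f + u"
      by (rule setsum_memE)
    then show ?thesis
      by (intro exI[of _ f]) simp
  qed
  define g where "g j = (SOME f. f \<in> F \<and> x j - f \<in> tail_sums a ?m')" for j
  have g: "g j \<in> F \<and> x j - g j \<in> tail_sums a ?m'" for j
    unfolding g_def by (rule someI_ex) (rule \<open>\<exists>f. _\<close>)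
  have "\<not> inj g"
  proof
    assume "inj g"
    have "range g \<subseteq> F"
      using g by blast
    with F(1) have "finite (range g)"
      by (rule finite_subset[rotated])
    from finite_imageD[OF this \<open>inj g\<close>] show False
      by (simp add: infinite_UNIV_nat)
  qed
  then obtain p q where "p \<noteq> q" "g p = g q"
    by (auto simp: inj_def)
  define i j where "i = min p q" and "j = max p q"
  have "i < j" "g i = g j"
    using \<open>p \<noteq> q\<close> \<open>g p = g q\<close> by (auto simp: i_def j_def min_def max_def)
  then have "x j - x i = (x j - g j) + - (x i - g i)"
    by (simp add: algebra_simps)
  also have "\<dots> \<in> tail_sums a m"
    using g by (intro tail_sums_add uminus_in_tail_sums) simp_all
  finally show thesis
    using \<open>i < j\<close> that by blast
qed

lemma sequence_outside_translates:
  fixes S :: "nat \<Rightarrow> 'a::ab_group_add set"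
  assumes "\<And>F n. finite F \<Longrightarrow> \<not> K \<subseteq> setsum F (S n)"
  obtains x where "range x \<subseteq> K" "\<And>i j. i < j \<Longrightarrow> x j - x i \<notin> S j"
proof -
  define c where "c F n = (SOME y. y \<in> K \<and> y \<notin> setsum F (S n))" for F n
  have c: "c F n \<in> K \<and> c F n \<notin> setsum F (S n)" if "finite F" for F n
  proof -
    have "\<exists>y. y \<in> K \<and> y \<notin> setsum F (S n)"
      using assms[OF that] by auto
    then show ?thesis
      unfolding c_def by (rule someI_ex)
  qed
  define X where "X = rec_nat {} (\<lambda>j X. insert (c X j) X)"
  define x where "x j = c (X j) j" for j
  have X_Suc: "X (Suc j) = insert (x j) (X j)" for j
    by (simp add: X_def x_def)
  have finite_X: "finite (X j)" for j
    by (induction j) (simp_all add: X_Suc, simp add: X_def)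
  have "x j - x i \<notin> S j" if "i < j" for i j
  proof
    assume "x j - x i \<in> S j"
    have "X (Suc i) \<subseteq> X j"
      by (rule lift_Suc_mono_le[of X]) (use that in \<open>auto simp: X_Suc Suc_le_eq\<close>)
    then have "x i \<in> X j"
      by (simp add: X_Suc)
    then have "x i + (x j - x i) \<in> setsum (X j) (S j)"
      using \<open>x j - x i \<in> S j\<close> by (rule setsum_memI)
    with c[OF finite_X] show False
      by (simp add: x_def)
  qed
  moreover have "range x \<subseteq> K"
    using c[OF finite_X] by (auto simp: x_def)
  ultimately show thesis
    using that by blast
qed

lemma dominating_shifts:
  fixes M :: "nat \<Rightarrow> nat \<Rightarrow> nat \<Rightarrow> nat"
  obtains m where "\<And>i j r. i < j \<Longrightarrow> M i j r \<le> m (j + r)"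
proof -
  let ?m = "\<lambda>p. \<Sum>j\<le>p. \<Sum>i<j. M i j (p - j)"
  have "M i j r \<le> ?m (j + r)" if "i < j" for i j r
  proof -
    have "M i j r \<le> (\<Sum>i<j. M i j r)"
      using that by (intro member_le_sum) auto
    also have "\<dots> \<le> ?m (j + r)"
      using member_le_sum[of j "{..j + r}" "\<lambda>j'. \<Sum>i<j'. M i j' (j + r - j')"] by simp
    finally show ?thesis .
  qed
  then show thesis
    by (rule that)
qed

text \<open>A point of \<open>x j - x i + tail_sums a (M i j)\<close> lying in \<open>nsum (tails a 0) j\<close> is excluded by
  closedness; splitting a sum in \<open>tail_sums a m\<close> after its first \<open>j\<close> terms reduces the general
  case to this, once \<open>m\<close> dominates all the shifted \<open>M i j\<close>.\<close>
lemma tail_sums_separated_sequence: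
  fixes x :: "nat \<Rightarrow> 'a::ab_group_add"
  assumes H: "Hausdorff_space (tail_topology a)"
    and x: "\<And>i j. i < j \<Longrightarrow> x j - x i \<notin> nsum (tails a 0) j"
  obtains m where "\<And>i j. i < j \<Longrightarrow> x j - x i \<notin> tail_sums a m"
proof -
  let ?P = "\<lambda>i j M. (+) (x j - x i) ` tail_sums a M \<subseteq> - nsum (tails a 0) j"
  have ex: "\<exists>M. ?P i j M" if "i < j" for i j
  proof -
    have "openin (tail_topology a) (- nsum (tails a 0) j)"
      using compactin_imp_closedin[OF H compactin_nsum_tails]
      by (simp add: closedin_def Compl_eq_Diff_UNIV)
    with x[OF that] show ?thesis
      unfolding openin_tail_topology by blast
  qed
  define M where "M i j = (SOME M'. ?P i j M')" for i j
  have M: "?P i j (M i j)" if "i < j" for i j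
    unfolding M_def using ex[OF that] by (rule someI_ex)
  obtain m where m: "\<And>i j r. i < j \<Longrightarrow> M i j r \<le> m (j + r)"
    using dominating_shifts[of M] by blast
  have "x j - x i \<notin> tail_sums a m" if "i < j" for i j
  proof
    assume "x j - x i \<in> tail_sums a m"
    then obtain s u where s: "s \<in> nsum (tails a 0) j" and u: "u \<in> tail_sums a (\<lambda>r. m (j + r))"
      and split: "x j - x i = s + u"
      by (rule tail_sums_split)
    have "tail_sums a (\<lambda>r. m (j + r)) \<subseteq> tail_sums a (M i j)"
      by (rule tail_sums_antimono) (rule m[OF that])
    with u have "- u \<in> tail_sums a (M i j)"
      by (blast intro: uminus_in_tail_sums)
    then have "(x j - x i) + - u \<notin> nsum (tails a 0) j"
      using M[OF that] by blast
    with s show False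
      by (simp add: split)
  qed
  then show thesis
    by (rule that)
qed

lemma compactin_subset_setsum_nsum:
  assumes H: "Hausdorff_space (tail_topology a)" and K: "compactin (tail_topology a) K"
  obtains F n where "finite F" "K \<subseteq> setsum F (nsum (tails a 0) n)"
proof -
  have "\<exists>F n. finite F \<and> K \<subseteq> setsum F (nsum (tails a 0) n)"
  proof (rule ccontr)
    assume "\<nexists>F n. finite F \<and> K \<subseteq> setsum F (nsum (tails a 0) n)"
    then have "\<not> K \<subseteq> setsum F (nsum (tails a 0) n)" if "finite F" for F n
      using that by blast
    then obtain x where x: "range x \<subseteq> K" "\<And>i j. i < j \<Longrightarrow> x j - x i \<notin> nsum (tails a 0) j"
      using sequence_outside_translates[of K "nsum (tails a 0)"] by blast
    obtain m where m: "\<And>i j. i < j \<Longrightarrow> x j - x i \<notin> tail_sums a m"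
      using tail_sums_separated_sequence[OF H x(2)] by blast
    obtain i j where "i < j" "x j - x i \<in> tail_sums a m"
      using compactin_close_pair[OF K x(1)] by blast
    with m show False
      by blast
  qed
  then show thesis
    using that by blast
qed

section \<open>Precompact sets and the sequential ideal\<close>

lemma precompacts_tail_topology:
  assumes H: "Hausdorff_space (tail_topology a)"
  shows "precompacts (tail_topology a) = sums_ideal (tails a 0)"
proof (intro subset_antisym subsetI)
  fix B assume "B \<in> precompacts (tail_topology a)"
  then have "compactin (tail_topology a) ((tail_topology a) closure_of B)"
    unfolding precompacts_def by blast
  then obtain F n where "finite F" "(tail_topology a) closure_of B \<subseteq> setsum F (nsum (tails a 0) n)"
    using compactin_subset_setsum_nsum[OF H] by blast
  moreover have "B \<subseteq> (tail_topology a) closure_of B"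
    by (simp add: closure_of_subset)
  ultimately show "B \<in> sums_ideal (tails a 0)"
    by (blast intro: sums_idealI)
next
  fix B assume "B \<in> sums_ideal (tails a 0)"
  then obtain F n where "finite F" "B \<subseteq> setsum F (nsum (tails a 0) n)"
    by (rule sums_idealE)
  moreover have "compactin (tail_topology a) (setsum F (nsum (tails a 0) n))"
    using \<open>finite F\<close>
    by (intro compactin_setsum group_topology_tail_topology compactin_nsum_tails finite_imp_compactin) simp_all
  ultimately show "B \<in> precompacts (tail_topology a)"
    using H by (blast intro: precompactsI)
qed

lemma seq_ideal_tail_topology:
  assumes H: "Hausdorff_space (tail_topology a)"
  shows "seq_ideal (tail_topology a) = sums_ideal (tails a 0)"
proof (intro subset_antisym)
  have "group_ideal (sums_ideal (tails a 0))"
    by (rule group_ideal_sums_ideal) (rule uminus_in_tails)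
  moreover have "insert x (range xs) \<in> sums_ideal (tails a 0)"
    if "limitin (tail_topology a) xs x sequentially" for x xs
    unfolding precompacts_tail_topology[OF H, symmetric]
    by (rule precompactsI[OF H compactin_sequence_with_limit[OF that order_refl]]) simp_all
  ultimately show "seq_ideal (tail_topology a) \<subseteq> sums_ideal (tails a 0)"
    unfolding seq_ideal_def by blast
next
  show "sums_ideal (tails a 0) \<subseteq> seq_ideal (tail_topology a)"
    unfolding seq_ideal_def
  proof (intro Inter_greatest, elim CollectE conjE)
    fix I assume I: "group_ideal I"
      and "\<forall>x xs. limitin (tail_topology a) xs x sequentially \<longrightarrow> insert x (range xs) \<in> I"
    then have "insert 0 (range a) \<in> I"
      using limitin_tail_topology by blast
    moreover have "tails a 0 = insert 0 (range a) \<union> uminus ` insert 0 (range a)"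
      unfolding tails_0 by auto
    ultimately have "tails a 0 \<in> I"
      using I setdiff_self_supset[of "insert 0 (range a)"]
      by (metis group_ideal_setdiff group_ideal_subset insertI1)
    with I show "sums_ideal (tails a 0) \<subseteq> I"
      by (rule sums_ideal_subset)
  qed
qed

theorem theorem1:
  fixes a :: "nat \<Rightarrow> 'a::ab_group_add"
  assumes "T_sequence a"
  defines "A \<equiv> {0} \<union> range a \<union> range (\<lambda>n. - a n)"
  shows "is_base {setsum F (nsum A n) | F n. finite F} (precompacts (tau a))
       \<and> precompacts (tau a) = seq_ideal (tau a)
       \<and> (gen_subgroup (range a) = UNIV \<longrightarrow> is_base (range (nsum A)) (precompacts (tau a)))"
proof -
  have A: "A = tails a 0"
    unfolding A_def tails_0 ..
  have H: "Hausdorff_space (tail_topology a)"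
    using assms(1) by (rule Hausdorff_tail_topology)
  have precompacts: "precompacts (tau a) = sums_ideal A"
    unfolding A tau_eq_tail_topology by (rule precompacts_tail_topology[OF H])
  have seq: "seq_ideal (tau a) = sums_ideal A"
    unfolding A tau_eq_tail_topology by (rule seq_ideal_tail_topology[OF H])
  have "0 \<in> A" "\<And>x. x \<in> A \<Longrightarrow> - x \<in> A" "range a \<subseteq> A"
    unfolding A by (auto simp: uminus_in_tails tails_def)
  then show ?thesis
    unfolding precompacts seq using is_base_sums_ideal[of A] is_base_nsum_sums_ideal[of A]
    by blast
qed

end
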